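(* Let $\Box$ be the full subcategory of $\mathbf{Poset}$ on the posets $[1]^n$ for $n \geq 0$, and let $\mathbf{Poset}_{\mathsf{compl},\mathsf{fin}}$ be the full subcategory of $\mathbf{Poset}$ on the finite posets that are complete. Then the inclusion $\Box \to \mathbf{Poset}_{\mathsf{compl},\mathsf{fin}}$ is an idempotent completion. That is: it is fully faithful, every idempotent in $\mathbf{Poset}_{\mathsf{compl},\mathsf{fin}}$ splits in $\mathbf{Poset}_{\mathsf{compl},\mathsf{fin}}$, and every finite complete poset is a retract, in $\mathbf{Poset}$, of $[1]^n$ for some $n \geq 0$.
   Context: $\mathbf{Poset}$ is the category of small posets and monotone maps; a poset is regarded as a category with at most one morphism $x \to y$, present exactly when $x \leq y$. $[1]$ is the poset $\{0 < 1\}$ and $[1]^n$ is its $n$-fold product (componentwise order). A poset is complete if every diagram in it has a limit; equivalently, every subset has a greatest lower bound. An idempotent $f\colon A \to A$ ($f^2=f$) splits if there are $r\colon A\to B$ and $s\colon B\to A$ with $rs=\mathrm{id}_B$ and $sr=f$. In that situation $B$ is called a retract of $A$. *)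

theory Defs
  imports Main
begin

definition poset_on :: "'a set \<Rightarrow> ('a \<Rightarrow> 'a \<Rightarrow> bool) \<Rightarrow> bool" where
  "poset_on A le \<longleftrightarrow>
     (\<forall>x\<in>A. le x x) \<and>
     (\<forall>x\<in>A. \<forall>y\<in>A. le x y \<and> le y x \<longrightarrow> x = y) \<and>
     (\<forall>x\<in>A. \<forall>y\<in>A. \<forall>z\<in>A. le x y \<and> le y z \<longrightarrow> le x z)"

definition is_glb :: "'a set \<Rightarrow> ('a \<Rightarrow> 'a \<Rightarrow> bool) \<Rightarrow> 'a set \<Rightarrow> 'a \<Rightarrow> bool" where
  "is_glb A le S g \<longleftrightarrow>
     g \<in> A \<and> (\<forall>s\<in>S. le g s) \<and> (\<forall>h\<in>A. (\<forall>s\<in>S. le h s) \<longrightarrow> le h g)"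

definition complete_poset :: "'a set \<Rightarrow> ('a \<Rightarrow> 'a \<Rightarrow> bool) \<Rightarrow> bool" where
  "complete_poset A le \<longleftrightarrow> poset_on A le \<and> (\<forall>S. S \<subseteq> A \<longrightarrow> (\<exists>g. is_glb A le S g))"

definition mono_map :: "'a set \<Rightarrow> ('a \<Rightarrow> 'a \<Rightarrow> bool) \<Rightarrow> 'b set \<Rightarrow> ('b \<Rightarrow> 'b \<Rightarrow> bool) \<Rightarrow> ('a \<Rightarrow> 'b) \<Rightarrow> bool" where
  "mono_map A leA B leB f \<longleftrightarrow>
     (\<forall>x\<in>A. f x \<in> B) \<and> (\<forall>x\<in>A. \<forall>y\<in>A. leA x y \<longrightarrow> leB (f x) (f y))"

text \<open>The cube [1]^n: functions {0..<n} \<rightarrow> {0<1} (encoded as bool, False < True),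
  extended by False outside {0..<n}; ordered componentwise (the pointwise order on nat \<Rightarrow> bool).\<close>

definition cube :: "nat \<Rightarrow> (nat \<Rightarrow> bool) set" where
  "cube n = {x. \<forall>i. n \<le> i \<longrightarrow> \<not> x i}"

end

theory Submission
  imports Defs
begin

text \<open>The cube \<open>[1]^n\<close> is a powerset lattice, so it is finite and complete. The image of a
  monotone idempotent on a complete poset is again complete, with meets computed as \<open>f\<close> of the
  ambient meets; it splits the idempotent. Finally, if \<open>a\<^sub>0, \<dots>, a\<^sub>n\<^sub>-\<^sub>1\<close> enumerate a
  finite complete poset \<open>A\<close>, then \<open>x \<mapsto> (i \<mapsto> x \<notle> a\<^sub>i)\<close> embeds \<open>A\<close> into \<open>[1]^n\<close>, and sending
  \<open>v\<close> to the meet of the \<open>a\<^sub>i\<close> with \<open>v i\<close> false is a monotone retraction, because every \<open>x\<close> is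
  the meet of its principal up-set.\<close>

lemma is_glb_unique:
  assumes "poset_on A le" "is_glb A le S g" "is_glb A le S g'"
  shows "g = g'"
  using assms unfolding poset_on_def is_glb_def by blast

lemma is_glb_antimono:
  assumes "S \<subseteq> T" "is_glb A le S g" "is_glb A le T g'"
  shows "le g' g"
  using assms unfolding is_glb_def by blast

lemma complete_poset_is_glb_SOME:
  assumes "complete_poset A le" "S \<subseteq> A"
  shows "is_glb A le S (SOME g. is_glb A le S g)"
  using assms unfolding complete_poset_def by (metis someI_ex)

lemma is_glb_principal_upset:
  assumes "poset_on A le" "x \<in> A"
  shows "is_glb A le {y \<in> A. le x y} x"
  using assms unfolding is_glb_def poset_on_def by blast

lemma cube_eq_image_Pow: "cube n = (\<lambda>X i. i \<in> X) ` Pow {..<n}"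
proof
  show "cube n \<subseteq> (\<lambda>X i. i \<in> X) ` Pow {..<n}"
  proof
    fix x assume "x \<in> cube n"
    then have "{i. x i} \<in> Pow {..<n}"
      unfolding cube_def using not_le by auto
    then show "x \<in> (\<lambda>X i. i \<in> X) ` Pow {..<n}"
      by (intro image_eqI[where x = "{i. x i}"]) auto
  qed
qed (auto simp: cube_def)

lemma finite_cube: "finite (cube n)"
  by (simp add: cube_eq_image_Pow)

lemma is_glb_cube:
  assumes "S \<subseteq> cube n"
  shows "is_glb (cube n) (\<le>) S (\<lambda>i. i < n \<and> (\<forall>s\<in>S. s i))"
  using assms unfolding is_glb_def cube_def le_fun_def by (auto simp: not_le)

lemma complete_poset_cube: "complete_poset (cube n) (\<le>)"
  unfolding complete_poset_def poset_on_def
  using is_glb_cube by (blast intro: order_antisym order_trans)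

lemma complete_poset_image_idempotent:
  assumes c: "complete_poset A le" and m: "mono_map A le A le f"
    and idem: "\<forall>x\<in>A. f (f x) = f x"
  shows "complete_poset (f ` A) le"
  unfolding complete_poset_def
proof (intro conjI allI impI)
  have fA: "f ` A \<subseteq> A" using m unfolding mono_map_def by blast
  then show "poset_on (f ` A) le"
    using c unfolding complete_poset_def poset_on_def by (meson subsetD)
  fix S assume S: "S \<subseteq> f ` A"
  then obtain g where g: "is_glb A le S g"
    using c fA unfolding complete_poset_def by (meson order_trans)
  have "is_glb (f ` A) le S (f g)"
    unfolding is_glb_def
  proof (intro conjI ballI impI)
    have gA: "g \<in> A" using g unfolding is_glb_def by blast
    then show "f g \<in> f ` A" by blast
    fix s assume "s \<in> S"
    then obtain a where "a \<in> A" "s = f a" "le g s" using S g unfolding is_glb_def by blast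
    then show "le (f g) s" using m gA idem fA unfolding mono_map_def by (metis image_subset_iff)
  next
    fix h assume h: "h \<in> f ` A" "\<forall>s\<in>S. le h s"
    then obtain a where "a \<in> A" "h = f a" "le h g" using g fA unfolding is_glb_def by blast
    then show "le h (f g)" using m g idem fA unfolding mono_map_def is_glb_def by (metis image_subset_iff)
  qed
  then show "\<exists>g. is_glb (f ` A) le S g" by blast
qed

lemma idempotent_splits_through_image:
  fixes A :: "'a set"
  assumes "finite A" "complete_poset A le" "mono_map A le A le f"
    and idem: "\<forall>x\<in>A. f (f x) = f x"
  shows "\<exists>(B :: 'a set) leB r s. finite B \<and> complete_poset B leB \<and>
           mono_map A le B leB r \<and> mono_map B leB A le s \<and>
           (\<forall>y\<in>B. r (s y) = y) \<and> (\<forall>x\<in>A. s (r x) = f x)"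
proof (rule exI[of _ "f ` A"], rule exI[of _ le], rule exI[of _ f], rule exI[of _ id], intro conjI)
  show "finite (f ` A)" using assms(1) by simp
  show "complete_poset (f ` A) le"
    using complete_poset_image_idempotent assms(2-4) .
  show "mono_map A le (f ` A) le f" "mono_map (f ` A) le A le id"
    using assms(3) unfolding mono_map_def by auto
  show "\<forall>y\<in>f ` A. f (id y) = y" "\<forall>x\<in>A. id (f x) = f x"
    using idem by auto
qed

lemma retract_of_cube_enumerated:
  assumes c: "complete_poset A le" and enum: "A = a ` {i. i < n}"
  defines "s \<equiv> \<lambda>x i. i < n \<and> \<not> le x (a i)"
    and "r \<equiv> \<lambda>v. SOME g. is_glb A le (a ` {i. i < n \<and> \<not> v i}) g"
  shows "mono_map (cube n) (\<le>) A le r" "mono_map A le (cube n) (\<le>) s"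
    and "\<forall>x\<in>A. r (s x) = x"
proof -
  have p: "poset_on A le" using c unfolding complete_poset_def by blast
  have r: "is_glb A le (a ` {i. i < n \<and> \<not> v i}) (r v)" for v
  proof -
    have "a ` {i. i < n \<and> \<not> v i} \<subseteq> A" using enum by auto
    then show ?thesis unfolding r_def by (rule complete_poset_is_glb_SOME[OF c])
  qed
  show "mono_map (cube n) (\<le>) A le r"
    unfolding mono_map_def
  proof (intro conjI ballI impI)
    fix v :: "nat \<Rightarrow> bool" show "r v \<in> A" using r[of v] unfolding is_glb_def by blast
  next
    fix v w :: "nat \<Rightarrow> bool" assume "v \<le> w"
    then have "a ` {i. i < n \<and> \<not> w i} \<subseteq> a ` {i. i < n \<and> \<not> v i}"
      unfolding le_fun_def by auto
    then show "le (r v) (r w)" by (rule is_glb_antimono[OF _ r r])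
  qed
  show "mono_map A le (cube n) (\<le>) s"
    unfolding mono_map_def
  proof (intro conjI ballI impI)
    fix x show "s x \<in> cube n" unfolding s_def cube_def by auto
  next
    fix x y assume xy: "x \<in> A" "y \<in> A" "le x y"
    have "\<not> le y (a i)" if "i < n" "\<not> le x (a i)" for i
    proof -
      have "a i \<in> A" using enum \<open>i < n\<close> by blast
      then show ?thesis using p xy that unfolding poset_on_def by blast
    qed
    then show "s x \<le> s y" unfolding s_def le_fun_def by simp
  qed
  show "\<forall>x\<in>A. r (s x) = x"
  proof
    fix x assume x: "x \<in> A"
    have "{i. i < n \<and> \<not> s x i} = {i. i < n \<and> le x (a i)}"
      unfolding s_def by auto
    then have "a ` {i. i < n \<and> \<not> s x i} = {y \<in> A. le x y}"
      using enum by auto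
    then have "is_glb A le {y \<in> A. le x y} (r (s x))"
      using r[of "s x"] by simp
    then show "r (s x) = x"
      using is_glb_unique[OF p _ is_glb_principal_upset[OF p x]] by blast
  qed
qed

lemma retract_of_cube:
  assumes "finite A" "complete_poset A le"
  shows "\<exists>n r s. mono_map (cube n) (\<le>) A le r \<and> mono_map A le (cube n) (\<le>) s \<and>
           (\<forall>x\<in>A. r (s x) = x)"
proof -
  obtain n :: nat and a where "A = a ` {i. i < n}"
    using assms(1) unfolding finite_conv_nat_seg_image by blast
  from retract_of_cube_enumerated[OF assms(2) this] show ?thesis by blast
qed

theorem mainTheorem1:
  shows "(\<forall>n. finite (cube n) \<and> complete_poset (cube n) (\<le>))
   \<and> (\<forall>(A :: 'a set) le f.
        finite A \<and> complete_poset A le \<and> mono_map A le A le f \<and> (\<forall>x\<in>A. f (f x) = f x) \<longrightarrow>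
        (\<exists>(B :: 'a set) leB r s. finite B \<and> complete_poset B leB \<and>
            mono_map A le B leB r \<and> mono_map B leB A le s \<and>
            (\<forall>y\<in>B. r (s y) = y) \<and> (\<forall>x\<in>A. s (r x) = f x)))
   \<and> (\<forall>(A :: 'a set) le.
        finite A \<and> complete_poset A le \<longrightarrow>
        (\<exists>n r s. mono_map (cube n) (\<le>) A le r \<and> mono_map A le (cube n) (\<le>) s \<and>
            (\<forall>x\<in>A. r (s x) = x)))"
proof (intro conjI allI impI; (elim conjE)?)
  show "finite (cube n)" "complete_poset (cube n) (\<le>)" for n
    by (rule finite_cube complete_poset_cube)+
next
  fix A :: "'a set" and le f
  assume "finite A" "complete_poset A le" "mono_map A le A le f" "\<forall>x\<in>A. f (f x) = f x"
  then show "\<exists>(B :: 'a set) leB r s. finite B \<and> complete_poset B leB \<and>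
      mono_map A le B leB r \<and> mono_map B leB A le s \<and>
      (\<forall>y\<in>B. r (s y) = y) \<and> (\<forall>x\<in>A. s (r x) = f x)"
    by (rule idempotent_splits_through_image)
next
  fix A :: "'a set" and le
  assume "finite A" "complete_poset A le"
  then show "\<exists>n r s. mono_map (cube n) (\<le>) A le r \<and> mono_map A le (cube n) (\<le>) s \<and>
      (\<forall>x\<in>A. r (s x) = x)"
    by (rule retract_of_cube)
qed

end
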